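(* Let $M$ be the monoid presented by $\langle a,b,c\mid ac=ca,\ bc=cb,\ cab=cbb\rangle$. The infinite rewriting system over $\{a,b,c\}$ with rules $ac\to ca$, $bc\to cb$, and $cuab\to cubb$ for every $u\in\{a,b\}^*$ (the case $u=\varepsilon$ being $cab\to cbb$) is a complete (noetherian and confluent) rewriting system presenting $M$, and its set of irreducible words is $\{a,b\}^*\cup c^+b^*a^*$. *)

theory Defs
  imports Main
begin

datatype gen = a | b | c

type_synonym word = "gen list"

definition rstep :: "(word \<times> word) set \<Rightarrow> (word \<times> word) set" where
  "rstep R = {(u @ l @ v, u @ r @ v) | u l r v. (l, r) \<in> R}"

definition thue_cong :: "(word \<times> word) set \<Rightarrow> (word \<times> word) set" where
  "thue_cong R = (rstep R \<union> (rstep R)\<inverse>)\<^sup>*"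

definition noetherian :: "(word \<times> word) set \<Rightarrow> bool" where
  "noetherian R \<longleftrightarrow> wf ((rstep R)\<inverse>)"

definition confluent :: "(word \<times> word) set \<Rightarrow> bool" where
  "confluent R \<longleftrightarrow> (\<forall>x y z. (x, y) \<in> (rstep R)\<^sup>* \<and> (x, z) \<in> (rstep R)\<^sup>* \<longrightarrow>
      (\<exists>w. (y, w) \<in> (rstep R)\<^sup>* \<and> (z, w) \<in> (rstep R)\<^sup>*))"

definition complete :: "(word \<times> word) set \<Rightarrow> bool" where
  "complete R \<longleftrightarrow> noetherian R \<and> confluent R"

definition irreducible :: "(word \<times> word) set \<Rightarrow> word set" where
  "irreducible R = {w. \<not> (\<exists>w'. (w, w') \<in> rstep R)}"

definition M_rels :: "(word \<times> word) set" where
  "M_rels = {([a, c], [c, a]), ([b, c], [c, b]), ([c, a, b], [c, b, b])}"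

definition S_rules :: "(word \<times> word) set" where
  "S_rules = {([a, c], [c, a]), ([b, c], [c, b])} \<union>
     {([c] @ u @ [a, b], [c] @ u @ [b, b]) | u. set u \<subseteq> {a, b}}"

end

theory Submission
  imports Defs
begin

text \<open>
  Termination: every rule either turns an a into a b, or (ac \<rightarrow> ca,
  bc \<rightarrow> cb) keeps the letters and decreases the number of pairs "non-c letter before
  a c"; so the pair (#a, #inversions) decreases lexicographically.
  Confluence: rather than analysing the infinitely many critical pairs we use an
  invariant.  Every step preserves the number of c's, the word itself when it has no c,
  the length, and the number of trailing a's of the c-free projection.  These data
  determine an irreducible word uniquely, and in a terminating system an invariant that
  separates irreducible words forces any two reducts of a word to have the same normal
  form.  Irreducible words are exactly {a,b}* \<union> c c* b* a*: in an irreducible word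
  containing a c, all c's come first (rules ac, bc) and no factor ab follows them.
  Presentation: the finite relations are among the rules, and c u ab = c u bb follows
  from them by moving c past u with ac = ca, bc = cb.
\<close>

section \<open>General facts about string rewriting\<close>

lemma rstep_I: "(l, r) \<in> R \<Longrightarrow> (u @ l @ v, u @ r @ v) \<in> rstep R"
  unfolding rstep_def by blast

lemma rstep_context: "(x, y) \<in> rstep R \<Longrightarrow> (p @ x @ q, p @ y @ q) \<in> rstep R"
  unfolding rstep_def by auto (metis append.assoc)

lemma thue_cong_step: "(x, y) \<in> rstep R \<Longrightarrow> (x, y) \<in> thue_cong R"
  unfolding thue_cong_def by auto

lemma thue_cong_rule: "(l, r) \<in> R \<Longrightarrow> (l, r) \<in> thue_cong R"
  using thue_cong_step[OF rstep_I[of l r R "[]" "[]"]] by simp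

lemma thue_cong_sym: "(x, y) \<in> thue_cong R \<Longrightarrow> (y, x) \<in> thue_cong R"
  unfolding thue_cong_def
  by (metis converse_Un converse_converse converse_iff rtrancl_converse sup_commute)

lemma thue_cong_trans:
  "(x, y) \<in> thue_cong R \<Longrightarrow> (y, z) \<in> thue_cong R \<Longrightarrow> (x, z) \<in> thue_cong R"
  unfolding thue_cong_def by (meson rtrancl_trans)

lemma thue_cong_context:
  "(x, y) \<in> thue_cong R \<Longrightarrow> (p @ x @ q, p @ y @ q) \<in> thue_cong R"
  unfolding thue_cong_def
proof (induction rule: rtrancl_induct)
  case (step y z)
  then have "(p @ y @ q, p @ z @ q) \<in> rstep R \<union> (rstep R)\<inverse>"
    using rstep_context by blast
  with step.IH show ?case by (rule rtrancl_into_rtrancl)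
qed simp

lemma thue_cong_subset:
  assumes "\<And>l r. (l, r) \<in> R \<Longrightarrow> (l, r) \<in> thue_cong R'"
  shows "thue_cong R \<subseteq> thue_cong R'"
proof -
  have steps: "rstep R \<subseteq> thue_cong R'"
  proof
    fix q assume "q \<in> rstep R"
    then obtain u l r v where q: "q = (u @ l @ v, u @ r @ v)" and lr: "(l, r) \<in> R"
      unfolding rstep_def by blast
    show "q \<in> thue_cong R'" unfolding q by (rule thue_cong_context[OF assms[OF lr]])
  qed
  then have "rstep R \<union> (rstep R)\<inverse> \<subseteq> thue_cong R'" using thue_cong_sym by blast
  then have "thue_cong R \<subseteq> (thue_cong R')\<^sup>*" unfolding thue_cong_def by (rule rtrancl_mono)
  then show ?thesis unfolding thue_cong_def rtrancl_idemp .
qed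

lemma irreducibleI: "(\<And>w'. (w, w') \<in> rstep R \<Longrightarrow> False) \<Longrightarrow> w \<in> irreducible R"
  unfolding irreducible_def by blast

lemma irreducible_no_lhs:
  "w \<in> irreducible R \<Longrightarrow> (l, r) \<in> R \<Longrightarrow> w \<noteq> u @ l @ v"
  unfolding irreducible_def using rstep_I by blast

lemma irreducible_suffix: "p @ w \<in> irreducible R \<Longrightarrow> w \<in> irreducible R"
  unfolding irreducible_def using rstep_context[of w _ R p "[]"] by auto

lemma normal_form_exists:
  assumes "noetherian R"
  shows "\<exists>y. (x, y) \<in> (rstep R)\<^sup>* \<and> y \<in> irreducible R"
  using assms unfolding noetherian_def
proof (induction x rule: wf_induct_rule)
  case (less x)
  show ?case
  proof (cases "x \<in> irreducible R")
    case False
    then obtain x' where x': "(x, x') \<in> rstep R" by (auto simp: irreducible_def)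
    then obtain y where "(x', y) \<in> (rstep R)\<^sup>*" "y \<in> irreducible R" using less by auto
    then show ?thesis using x' by (meson converse_rtrancl_into_rtrancl)
  qed auto
qed

lemma confluent_by_invariant:
  assumes noeth: "noetherian R"
    and inv: "\<And>x y. (x, y) \<in> rstep R \<Longrightarrow> f x = f y"
    and sep: "\<And>x y. x \<in> irreducible R \<Longrightarrow> y \<in> irreducible R \<Longrightarrow> f x = f y \<Longrightarrow> x = y"
  shows "confluent R"
  unfolding confluent_def
proof (intro allI impI)
  fix x y z assume "(x, y) \<in> (rstep R)\<^sup>* \<and> (x, z) \<in> (rstep R)\<^sup>*"
  then have xy: "(x, y) \<in> (rstep R)\<^sup>*" and xz: "(x, z) \<in> (rstep R)\<^sup>*" by auto
  have invs: "f u = f v" if "(u, v) \<in> (rstep R)\<^sup>*" for u v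
    using that by (induction rule: rtrancl_induct) (auto dest: inv)
  obtain y' where y': "(y, y') \<in> (rstep R)\<^sup>*" "y' \<in> irreducible R"
    using normal_form_exists[OF noeth] by blast
  obtain z' where z': "(z, z') \<in> (rstep R)\<^sup>*" "z' \<in> irreducible R"
    using normal_form_exists[OF noeth] by blast
  have "f y' = f x" "f z' = f x"
    using invs[OF rtrancl_trans[OF xy y'(1)]] invs[OF rtrancl_trans[OF xz z'(1)]] by simp_all
  then have "y' = z'" using sep[OF y'(2) z'(2)] by simp
  then show "\<exists>w. (y, w) \<in> (rstep R)\<^sup>* \<and> (z, w) \<in> (rstep R)\<^sup>*" using y' z' by blast
qed

lemma rstep_S_cases:
  assumes "(x, y) \<in> rstep S_rules"
  obtains u v where "x = u @ [a, c] @ v" "y = u @ [c, a] @ v"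
  | u v where "x = u @ [b, c] @ v" "y = u @ [c, b] @ v"
  | u p v where "set p \<subseteq> {a, b}" "x = u @ (c # p @ [a, b]) @ v" "y = u @ (c # p @ [b, b]) @ v"
  using assms unfolding rstep_def S_rules_def by auto

subsection \<open>Termination\<close>

definition count :: "gen \<Rightarrow> word \<Rightarrow> nat" where
  "count x w = length (filter (\<lambda>y. y = x) w)"

definition cfree :: "word \<Rightarrow> word" where
  "cfree w = filter (\<lambda>x. x \<noteq> c) w"

fun inversions :: "word \<Rightarrow> nat" where
  "inversions [] = 0"
| "inversions (x # w) = (if x = c then 0 else count c w) + inversions w"

lemma inversions_append:
  "inversions (p @ q) = inversions p + inversions q + length (cfree p) * count c q"
  by (induction p) (auto simp: cfree_def count_def)

lemma S_terminating: "noetherian S_rules"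
proof -
  let ?measure = "inv_image (less_than <*lex*> less_than) (\<lambda>w. (count a w, inversions w))"
  have "(rstep S_rules)\<inverse> \<subseteq> ?measure"
  proof
    fix q assume "q \<in> (rstep S_rules)\<inverse>"
    then obtain x y where q: "q = (y, x)" and xy: "(x, y) \<in> rstep S_rules" by auto
    from xy show "q \<in> ?measure"
      by (cases rule: rstep_S_cases) (simp_all add: q inversions_append count_def cfree_def)
  qed
  then show ?thesis unfolding noetherian_def
    by (rule wf_subset[OF wf_inv_image[OF wf_lex_prod[OF wf_less_than wf_less_than]]])
qed

subsection \<open>Irreducible words\<close>

lemma no_ab_factor_sorted:
  assumes "set w \<subseteq> {a, b}" "\<And>p q. w \<noteq> p @ [a, b] @ q"
  shows "\<exists>j k. w = replicate j b @ replicate k a"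
  using assms
proof (induction w)
  case Nil then show ?case by (metis append_Nil replicate_0)
next
  case (Cons y w)
  have "w \<noteq> p @ [a, b] @ q" for p q
    using Cons.prems(2)[of "y # p" q] by auto
  with Cons obtain j k where w: "w = replicate j b @ replicate k a" by auto
  show ?case
  proof (cases y)
    case a
    then have "j = 0" using Cons.prems(2)[of "[]" "replicate (j - 1) b @ replicate k a"] w
      by (cases j) auto
    then show ?thesis using a w by (metis append_Nil replicate_0 replicate_Suc)
  next
    case b then show ?thesis using w by (metis append_Cons replicate_Suc)
  next
    case c then show ?thesis using Cons.prems by auto
  qed
qed

text \<open>Irreducible words are either c-free or of the form c c* b* a*: an irreducible word
  with a c has no a or b before a c (rules ac, bc) and, once the c's are passed, no ab.\<close>
lemma irreducible_S_shape:
  "w \<in> irreducible S_rules \<Longrightarrow>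
     set w \<subseteq> {a, b} \<or> (\<exists>i j k. w = replicate i c @ replicate j b @ replicate k a \<and> i \<ge> 1)"
proof (induction w)
  case (Cons x w)
  note irr = irreducible_no_lhs[OF Cons.prems]
  have IH: "set w \<subseteq> {a, b} \<or> (\<exists>i j k. w = replicate i c @ replicate j b @ replicate k a \<and> i \<ge> 1)"
    using Cons.IH irreducible_suffix[of "[x]" w] Cons.prems by simp
  show ?case
  proof (cases "x = c")
    case x: True
    show ?thesis
    proof (cases "set w \<subseteq> {a, b}")
      case True
      have "w \<noteq> p @ [a, b] @ q" for p q
      proof
        assume w: "w = p @ [a, b] @ q"
        with True have "([c] @ p @ [a, b], [c] @ p @ [b, b]) \<in> S_rules"
          unfolding S_rules_def by auto
        from irr[OF this, of "[]" q] show False using w x by simp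
      qed
      with True obtain j k where "w = replicate j b @ replicate k a"
        using no_ab_factor_sorted by blast
      then have "x # w = replicate 1 c @ replicate j b @ replicate k a" using x by simp
      then show ?thesis by blast
    next
      case False
      with IH obtain i j k where "w = replicate i c @ replicate j b @ replicate k a"
        by blast
      then have "x # w = replicate (Suc i) c @ replicate j b @ replicate k a" using x by simp
      moreover have "Suc i \<ge> 1" by simp
      ultimately show ?thesis by blast
    qed
  next
    case x: False
    show ?thesis
    proof (cases "set w \<subseteq> {a, b}")
      case True then show ?thesis using x by (cases x) auto
    next
      case False
      with IH obtain i j k where "w = replicate i c @ replicate j b @ replicate k a" "i \<ge> 1"
        by blast
      then obtain w' where w': "w = c # w'" by (cases i) auto
      have "([x, c], [c, x]) \<in> S_rules" using x by (cases x) (auto simp: S_rules_def)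
      from irr[OF this, of "[]" w'] w' show ?thesis by simp
    qed
  qed
qed simp

text \<open>Ranking c < b < a: every left-hand side contains a letter immediately
  followed (ac, bc) or eventually followed (c u ab) by one of smaller rank, so a word
  sorted by rank contains no redex.\<close>
fun rank :: "gen \<Rightarrow> nat" where
  "rank c = 0" | "rank b = 1" | "rank a = 2"

lemma sorted_irreducible: "sorted (map rank w) \<Longrightarrow> w \<in> irreducible S_rules"
  by (rule irreducibleI, erule rstep_S_cases) (auto simp: sorted_append)

lemma irreducible_S:
  "irreducible S_rules =
     {w. set w \<subseteq> {a, b}} \<union> {replicate i c @ replicate j b @ replicate k a | i j k. i \<ge> 1}"
proof (intro equalityI subsetI)
  fix w assume "w \<in> irreducible S_rules"
  then show "w \<in> {w. set w \<subseteq> {a, b}} \<union>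
      {replicate i c @ replicate j b @ replicate k a | i j k. i \<ge> 1}"
    using irreducible_S_shape by blast
next
  fix w assume "w \<in> {w. set w \<subseteq> {a, b}} \<union>
      {replicate i c @ replicate j b @ replicate k a | i j k. i \<ge> 1}"
  then consider "set w \<subseteq> {a, b}"
    | i j k where "w = replicate i c @ replicate j b @ replicate k a" by blast
  then show "w \<in> irreducible S_rules"
  proof cases
    case 1 \<comment> \<open>every left-hand side contains a c\<close>
    show ?thesis by (rule irreducibleI, erule rstep_S_cases) (use 1 in auto)
  next
    case 2
    then show ?thesis by (intro sorted_irreducible) (auto simp: sorted_append)
  qed
qed

subsection \<open>Confluence\<close>

definition trailing_a :: "word \<Rightarrow> nat" where
  "trailing_a w = length (takeWhile (\<lambda>x. x = a) (rev w))"

definition invariant :: "word \<Rightarrow> nat \<times> word \<times> nat \<times> nat" where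
  "invariant w =
     (count c w, if count c w = 0 then w else [], length w, trailing_a (cfree w))"

text \<open>Commuting c past a or b fixes all components; c u ab \<rightarrow> c u bb changes an a
  that is followed by a b, so the trailing a's of the projection are untouched.\<close>
lemma invariant_step: "(x, y) \<in> rstep S_rules \<Longrightarrow> invariant x = invariant y"
  by (cases rule: rstep_S_cases)
     (auto simp: invariant_def count_def cfree_def trailing_a_def takeWhile_append)

lemma invariant_normal_form:
  "invariant (replicate i c @ replicate j b @ replicate k a) =
     (i, if i = 0 then replicate j b @ replicate k a else [], i + j + k, k)"
  by (cases j) (auto simp: invariant_def count_def cfree_def trailing_a_def
      filter_replicate takeWhile_append)

lemma invariant_separates:
  assumes "x \<in> irreducible S_rules" "y \<in> irreducible S_rules" "invariant x = invariant y"
  shows "x = y"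
proof (cases "count c x = 0")
  case True
  with assms(3) show ?thesis by (auto simp: invariant_def)
next
  case False
  have no_c: "count c w \<noteq> 0 \<Longrightarrow> \<not> set w \<subseteq> {a, b}" for w
    by (auto simp: count_def filter_empty_conv)
  from False assms(3) have "count c y \<noteq> 0" by (auto simp: invariant_def)
  with False assms(1,2) obtain i j k i' j' k'
    where x: "x = replicate i c @ replicate j b @ replicate k a" "i \<ge> 1"
      and y: "y = replicate i' c @ replicate j' b @ replicate k' a" "i' \<ge> 1"
    using no_c unfolding irreducible_S by blast
  from assms(3) have "i = i'" "j = j'" "k = k'"
    unfolding x y invariant_normal_form by auto
  with x y show ?thesis by simp
qed

lemma S_confluent: "confluent S_rules"
  using S_terminating invariant_step invariant_separates by (rule confluent_by_invariant)

subsection \<open>S presents M\<close>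

lemma c_commutes:
  "set u \<subseteq> {a, b} \<Longrightarrow> (c # u, u @ [c]) \<in> thue_cong M_rels"
proof (induction u)
  case Nil then show ?case unfolding thue_cong_def by simp
next
  case (Cons x u)
  have "([x, c], [c, x]) \<in> M_rels" using Cons.prems unfolding M_rels_def by (cases x) auto
  then have "([] @ [x, c] @ u, [] @ [c, x] @ u) \<in> rstep M_rels" by (rule rstep_I)
  then have "(c # x # u, x # c # u) \<in> thue_cong M_rels"
    using thue_cong_step thue_cong_sym by fastforce
  moreover have "([x] @ (c # u) @ [], [x] @ (u @ [c]) @ []) \<in> thue_cong M_rels"
    using Cons by (intro thue_cong_context) auto
  ultimately show ?case using thue_cong_trans by fastforce
qed

text \<open>Each rule c u ab \<rightarrow> c u bb is derivable in M: c u ab = u cab = u cbb = c u bb.\<close>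
lemma S_rule_in_M: "(l, r) \<in> S_rules \<Longrightarrow> (l, r) \<in> thue_cong M_rels"
proof (unfold S_rules_def, elim UnE CollectE exE conjE)
  fix u assume lr: "(l, r) = ([c] @ u @ [a, b], [c] @ u @ [b, b])" and u: "set u \<subseteq> {a, b}"
  have "([c, a, b], [c, b, b]) \<in> M_rels" unfolding M_rels_def by auto
  then have "(u @ [c, a, b] @ [], u @ [c, b, b] @ []) \<in> rstep M_rels" by (rule rstep_I)
  then have "(u @ [c, a, b], u @ [c, b, b]) \<in> thue_cong M_rels" using thue_cong_step by simp
  moreover have "([] @ (c # u) @ [a, b], [] @ (u @ [c]) @ [a, b]) \<in> thue_cong M_rels"
    and "([] @ (c # u) @ [b, b], [] @ (u @ [c]) @ [b, b]) \<in> thue_cong M_rels"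
    using c_commutes[OF u] by (rule thue_cong_context)+
  ultimately have "(c # u @ [a, b], c # u @ [b, b]) \<in> thue_cong M_rels"
    using thue_cong_trans thue_cong_sym by (metis append.assoc append_Cons append_Nil)
  then show ?thesis using lr by simp
next
  assume "(l, r) \<in> {([a, c], [c, a]), ([b, c], [c, b])}"
  then have "(l, r) \<in> M_rels" unfolding M_rels_def by auto
  then show ?thesis by (rule thue_cong_rule)
qed

lemma M_rels_subset_S: "M_rels \<subseteq> S_rules"
proof -
  have "([c] @ [] @ [a, b], [c] @ [] @ [b, b]) \<in> S_rules"
    unfolding S_rules_def by (intro UnI2 CollectI exI[of _ "[]"]) simp
  then show ?thesis unfolding M_rels_def by (simp add: S_rules_def)
qed

lemma S_presents_M: "thue_cong S_rules = thue_cong M_rels"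
proof
  show "thue_cong S_rules \<subseteq> thue_cong M_rels"
    using S_rule_in_M by (rule thue_cong_subset)
  show "thue_cong M_rels \<subseteq> thue_cong S_rules"
    using M_rels_subset_S by (intro thue_cong_subset thue_cong_rule) blast
qed

theorem lemma3p10:
  shows "complete S_rules \<and> thue_cong S_rules = thue_cong M_rels \<and>
    irreducible S_rules =
      {w. set w \<subseteq> {a, b}} \<union>
      {replicate i c @ replicate j b @ replicate k a | i j k. i \<ge> 1}"
  using S_terminating S_confluent S_presents_M irreducible_S unfolding complete_def by blast

end
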